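(* For each $\sigma\in\{\underline{21}3,\ \underline{31}2,\ 2\underline{13},\ 2\underline{31},\ 3\underline{12}\}$, the set $\mathrm{Sort}(\mathrm{SC}_\sigma)$ is not a permutation class.
   Context: $\mathfrak S_n$ is the set of permutations of $\{1,\dots,n\}$. A permutation $\pi$ contains a (classical) permutation $\tau$ if some subsequence of $\pi$ has the same relative order as $\tau$. A permutation class is a set $\Pi$ of permutations such that every permutation contained in some $\pi\in\Pi$ is also in $\Pi$. A vincular pattern is a permutation with some entries underlined; a sequence contains it if it has a subsequence with the same relative order in which entries corresponding to adjacent underlined entries occupy consecutive positions (e.g. an occurrence of $\underline{21}3$ is $a_ja_{j+1}a_l$ with $l>j+1$ and $a_{j+1}<a_j<a_l$; an occurrence of $2\underline{13}$ is $a_ia_ja_{j+1}$ with $i<j$ and $a_j<a_i<a_{j+1}$). For a pattern $\sigma$, the map $\mathrm{SC}_\sigma$ acts on $\tau$: read entries left to right; when the next entry $x$ is read, if pushing $x$ yields a stack whose entries read top to bottom (stack adjacency = consecutive positions) avoid $\sigma$, push $x$; otherwise pop the top stack entry to the output and repeat. At the end pop all remaining entries; the output is $\mathrm{SC}_\sigma(\tau)$. West's stack-sorting map is $s=\mathrm{SC}_{21}$. $\mathrm{Sort}_n(\mathrm{SC}_\sigma)=\{\tau\in\mathfrak S_n : s(\mathrm{SC}_\sigma(\tau))=12\cdots n\}$ and $\mathrm{Sort}(\mathrm{SC}_\sigma)=\bigcup_{n\ge1}\mathrm{Sort}_n(\mathrm{SC}_\sigma)$. *)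

theory Defs
  imports Main
begin

text \<open>A vincular pattern is a pair (p, A): p is a permutation (list) and
  k \<in> A means that the entries at positions k and k+1 of p (0-based) are underlined
  together, i.e. they must occupy consecutive positions in an occurrence.
  A classical pattern has A = {}.\<close>

type_synonym vpattern = "nat list \<times> nat set"

definition same_order :: "nat list \<Rightarrow> nat list \<Rightarrow> bool" where
  "same_order xs ys \<longleftrightarrow> length xs = length ys \<and>
     (\<forall>i < length xs. \<forall>j < length xs. xs ! i < xs ! j \<longleftrightarrow> ys ! i < ys ! j)"

definition contains :: "nat list \<Rightarrow> vpattern \<Rightarrow> bool" where
  "contains w \<sigma> \<longleftrightarrow> (\<exists>is :: nat list.
     length is = length (fst \<sigma>) \<and> sorted_wrt (<) is \<and> (\<forall>i \<in> set is. i < length w) \<and>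
     (\<forall>k \<in> snd \<sigma>. Suc k < length is \<longrightarrow> is ! Suc k = Suc (is ! k)) \<and>
     same_order (map (\<lambda>i. w ! i) is) (fst \<sigma>))"

text \<open>The stack machine SC_sigma. The stack is a list whose head is the top, so the
  list itself reads the stack top to bottom.  sc_run \<sigma> input stack = output.\<close>

function sc_run :: "vpattern \<Rightarrow> nat list \<Rightarrow> nat list \<Rightarrow> nat list" where
  "sc_run \<sigma> [] st = st"
| "sc_run \<sigma> (x # xs) [] = sc_run \<sigma> xs [x]"
| "sc_run \<sigma> (x # xs) (y # st) =
     (if contains (x # y # st) \<sigma> then y # sc_run \<sigma> (x # xs) st
      else sc_run \<sigma> xs (x # y # st))"
  by pat_completeness auto
termination
  by (relation "measure (\<lambda>(\<sigma>, xs, st). 2 * length xs + length st)") auto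

definition SC :: "vpattern \<Rightarrow> nat list \<Rightarrow> nat list" where
  "SC \<sigma> \<tau> = sc_run \<sigma> \<tau> []"

definition west_s :: "nat list \<Rightarrow> nat list" where
  "west_s = SC ([2, 1], {})"

definition is_perm :: "nat list \<Rightarrow> bool" where
  "is_perm \<tau> \<longleftrightarrow> \<tau> \<noteq> [] \<and> distinct \<tau> \<and> set \<tau> = {1..length \<tau>}"

definition perm_contains :: "nat list \<Rightarrow> nat list \<Rightarrow> bool" where
  "perm_contains \<pi> \<tau> \<longleftrightarrow> contains \<pi> (\<tau>, {})"

definition perm_class :: "nat list set \<Rightarrow> bool" where
  "perm_class \<Pi> \<longleftrightarrow> (\<forall>\<pi> \<in> \<Pi>. is_perm \<pi>) \<and>
     (\<forall>\<pi> \<in> \<Pi>. \<forall>\<tau>. is_perm \<tau> \<and> perm_contains \<pi> \<tau> \<longrightarrow> \<tau> \<in> \<Pi>)"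

definition Sort_SC :: "vpattern \<Rightarrow> nat list set" where
  "Sort_SC \<sigma> = {\<tau>. is_perm \<tau> \<and> west_s (SC \<sigma> \<tau>) = [1..<Suc (length \<tau>)]}"

end

theory Submission
  imports Defs "HOL-Library.Sublist"
begin

(* Sort(SC_sigma) is not closed under containment: some sortable permutation contains an
   unsortable one.  For the four patterns other than 2\underline{31}, the machine never pops
   while reading 132 (the stack 3,1 is too short to contain sigma and the stack 2,3,1 avoids
   it), so SC_sigma(132) = 231 and s(231) = 213; yet 4132, respectively 3142, is sortable.
   For 2\underline{31} one gets SC_sigma(1324) = 3421 and s(3421) = 3124, while 361425 is
   sortable. *)

lemma sorted_wrt_subseq: "subseq xs ys \<Longrightarrow> sorted_wrt R ys \<Longrightarrow> sorted_wrt R xs"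
  by (induction rule: list_emb.induct) (auto dest: list_emb_set)

lemma subseq_upt_iff: "subseq ks [m..<n] \<longleftrightarrow> sorted_wrt (<) ks \<and> set ks \<subseteq> {m..<n}"
  using sorted_wrt_subseq[of ks "[m..<n]" "(<)"] sorted_subset_imp_subseq[of ks "[m..<n]"]
  by (auto simp: strict_sorted_imp_sorted elim: list_emb_set)

lemma contains_iff_subseqs [code]:
  "contains w \<sigma> \<longleftrightarrow> (\<exists>ks \<in> set (subseqs [0..<length w]). length ks = length (fst \<sigma>) \<and>
     (\<forall>k \<in> snd \<sigma>. Suc k < length ks \<longrightarrow> ks ! Suc k = Suc (ks ! k)) \<and>
     same_order (map (\<lambda>i. w ! i) ks) (fst \<sigma>))"
  unfolding contains_def set_subseqs_eq subseq_upt_iff by (auto simp: subset_iff)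

lemma same_order_code [code]:
  "same_order xs ys \<longleftrightarrow> length xs = length ys \<and>
     (\<forall>i \<in> set [0..<length xs]. \<forall>j \<in> set [0..<length xs]. xs ! i < xs ! j \<longleftrightarrow> ys ! i < ys ! j)"
  unfolding same_order_def by auto

lemma contains_length_le: "contains w \<sigma> \<Longrightarrow> length (fst \<sigma>) \<le> length w"
  unfolding contains_iff_subseqs set_subseqs_eq by (auto dest: list_emb_length)

lemma SC_132:
  assumes "2 < length (fst \<sigma>)" and "\<not> contains [2,3,1] \<sigma>"
  shows "SC \<sigma> [1,3,2] = [2,3,1]"
proof -
  have "\<not> contains [3,1] \<sigma>"
    using assms(1) contains_length_le[of "[3,1]" \<sigma>] by auto
  with assms(2) show ?thesis
    by (simp add: SC_def)
qed

lemma not_sortable_132: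
  assumes "2 < length (fst \<sigma>)" and "\<not> contains [2,3,1] \<sigma>"
  shows "[1,3,2] \<notin> Sort_SC \<sigma>"
proof -
  have "west_s [2,3,1] = [2,1,3]"
    unfolding west_s_def SC_def by code_simp
  with SC_132[OF assms] show ?thesis
    by (simp add: Sort_SC_def eval_nat_numeral)
qed

lemma not_perm_class_if_pattern_outside:
  assumes "\<pi> \<in> \<Pi>" and "is_perm \<tau>" and "perm_contains \<pi> \<tau>" and "\<tau> \<notin> \<Pi>"
  shows "\<not> perm_class \<Pi>"
  using assms unfolding perm_class_def by blast

lemma sortable_witnesses:
  "[4,1,3,2] \<in> Sort_SC ([2,1,3], {0})"
  "[3,1,4,2] \<in> Sort_SC ([3,1,2], {0})"
  "[3,1,4,2] \<in> Sort_SC ([2,1,3], {1})"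
  "[3,1,4,2] \<in> Sort_SC ([3,1,2], {1})"
  "[3,6,1,4,2,5] \<in> Sort_SC ([2,3,1], {1})"
  unfolding Sort_SC_def mem_Collect_eq west_s_def SC_def is_perm_def
  by code_simp+

lemma not_sortable_132_instances:
  "[1,3,2] \<notin> Sort_SC ([2,1,3], {0})"
  "[1,3,2] \<notin> Sort_SC ([3,1,2], {0})"
  "[1,3,2] \<notin> Sort_SC ([2,1,3], {1})"
  "[1,3,2] \<notin> Sort_SC ([3,1,2], {1})"
  by (rule not_sortable_132; code_simp)+

lemma not_sortable_1324: "[1,3,2,4] \<notin> Sort_SC ([2,3,1], {1})"
  unfolding Sort_SC_def mem_Collect_eq west_s_def SC_def
  by code_simp

theorem mainTheorem20:
  assumes "\<sigma> \<in> {([2,1,3], {0}), ([3,1,2], {0}), ([2,1,3], {1}), ([2,3,1], {1}), ([3,1,2], {1})}"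
  shows "\<not> perm_class (Sort_SC \<sigma>)"
proof -
  have patterns: "is_perm [1,3,2]" "is_perm [1,3,2,4]"
    "perm_contains [4,1,3,2] [1,3,2]" "perm_contains [3,1,4,2] [1,3,2]"
    "perm_contains [3,6,1,4,2,5] [1,3,2,4]"
    unfolding is_perm_def perm_contains_def by code_simp+
  from assms show ?thesis
    using not_perm_class_if_pattern_outside sortable_witnesses
      not_sortable_132_instances not_sortable_1324 patterns
    by auto
qed

end
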